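(* Let $|\xi\rangle=\sum_n\lambda_n|n\rangle\neq|0\rangle$ be a normalized single-mode pure state. Let $P_{\rm even}=\sum_{l\ge0}|2l\rangle\langle2l|$ and $P_{\rm odd}=\sum_{l\ge0}|2l+1\rangle\langle2l+1|$. (i) If $\lambda_n=0$ for all odd $n$, then with the measurements $\Pi^A_0=\Pi^B_0=P_{\rm even}$, $\Pi^A_1=\Pi^B_1=P_{\rm odd}$ one has $P(0,0|0,0)=P(0,0|1,1)=P(1,1|0,1)=P(1,1|1,0)=1$, and hence $\mathcal J=1$ (the maximal value); moreover in this case the outcomes satisfy $a=b=x\oplus y$ with probability one. (ii) If $\lambda_n=0$ for all even $n$, the same conclusion $\mathcal J=1$ holds with $\Pi^A_0=P_{\rm odd}$, $\Pi^A_1=P_{\rm even}$, $\Pi^B_0=P_{\rm even}$, $\Pi^B_1=P_{\rm odd}$. In particular $\mathcal J=1$ for the even-coherent state $|\xi\rangle\propto|\alpha\rangle+|-\alpha\rangle$ ($\alpha\neq0$), the odd-coherent state $|\xi\rangle\propto|\alpha\rangle-|-\alpha\rangle$ ($\alpha\ne0$), and the squeezed vacuum $|\xi\rangle=\exp[\tfrac12(\zeta^*a^2-\zeta a^{\dagger2})]|0\rangle$ ($\zeta\neq0$).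
   Context: Modes $A$ and $B$ have annihilation operators $a,b$ and Fock states $|n\rangle$; $|\alpha\rangle$ denotes a coherent state $e^{-|\alpha|^2/2}\sum_n\frac{\alpha^n}{\sqrt{n!}}|n\rangle$. For a normalized single-mode state $|\xi\rangle=\sum_n\lambda_n|n\rangle$ with $|\lambda_0|<1$ and input bits $x,y\in\{0,1\}$, the phase-encoded generalized NOON state is $|\Phi_{xy}\rangle=\mathcal N_{xy}^{-1/2}\big((-1)^x|\xi\rangle_A|0\rangle_B+(-1)^y|0\rangle_A|\xi\rangle_B\big)$ with $\mathcal N_{xy}=2(1+(-1)^{x+y}|\lambda_0|^2)$. The lossless 50:50 beam splitter is the unitary $U$ with $U|0,0\rangle=|0,0\rangle$, $Ua^\dagger U^\dagger=(a^\dagger+b^\dagger)/\sqrt2$, $Ub^\dagger U^\dagger=(a^\dagger-b^\dagger)/\sqrt2$; set $|\Phi''_{xy}\rangle=U|\Phi_{xy}\rangle$. For two-outcome projective measurements $\{\Pi^A_0,\Pi^A_1\}$, $\{\Pi^B_0,\Pi^B_1\}$, $P(a,b|x,y)=\langle\Phi''_{xy}|\Pi^A_a\otimes\Pi^B_b|\Phi''_{xy}\rangle$ and $\mathcal J=\frac14\big[P(0,0|0,0)+P(0,0|1,1)+P(1,1|0,1)+P(1,1|1,0)\big]$. $\oplus$ is addition mod 2. *)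

theory Defs
  imports "HOL-Analysis.Analysis"
begin

text \<open>Single-mode states are given by their Fock amplitudes (nat => complex);
two-mode states (modes A,B) by amplitudes indexed by (n_A, n_B).\<close>

definition normalized :: "(nat \<Rightarrow> complex) \<Rightarrow> bool" where
  "normalized l \<longleftrightarrow> ((\<lambda>n. (cmod (l n))\<^sup>2) has_sum 1) UNIV"

definition noon_norm :: "(nat \<Rightarrow> complex) \<Rightarrow> nat \<Rightarrow> nat \<Rightarrow> real" where
  "noon_norm l x y = 2 * (1 + (-1) ^ (x + y) * (cmod (l 0))\<^sup>2)"

definition noon :: "(nat \<Rightarrow> complex) \<Rightarrow> nat \<Rightarrow> nat \<Rightarrow> (nat \<times> nat \<Rightarrow> complex)" where
  "noon l x y = (\<lambda>(m, n). complex_of_real (1 / sqrt (noon_norm l x y)) *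
      ((-1) ^ x * (if n = 0 then l m else 0) + (-1) ^ y * (if m = 0 then l n else 0)))"

text \<open>Matrix element <k,j| U |m,n> of the 50:50 beam splitter determined by
  U|0,0> = |0,0>, U a^+ U^+ = (a^+ + b^+)/sqrt 2, U b^+ U^+ = (a^+ - b^+)/sqrt 2, i.e.
  U|m,n> = ((a^+ + b^+)/sqrt 2)^m ((a^+ - b^+)/sqrt 2)^n / sqrt(m! n!) |0,0>.\<close>
definition bs_amp :: "nat \<Rightarrow> nat \<Rightarrow> nat \<Rightarrow> nat \<Rightarrow> real" where
  "bs_amp k j m n =
     (if k + j = m + n then
        sqrt (fact k * fact j / (fact m * fact n * 2 ^ (m + n))) *
        (\<Sum>p\<le>m. \<Sum>q\<le>n. if p + q = k
             then real (m choose p) * real (n choose q) * (-1) ^ (n - q) else 0)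
      else 0)"

text \<open>Action of U on a two-mode state (U conserves total photon number, so each
  output amplitude is a finite sum).\<close>
definition beam_splitter :: "(nat \<times> nat \<Rightarrow> complex) \<Rightarrow> (nat \<times> nat \<Rightarrow> complex)" where
  "beam_splitter psi = (\<lambda>(k, j).
      \<Sum>m\<le>k + j. complex_of_real (bs_amp k j m (k + j - m)) * psi (m, k + j - m))"

text \<open>Projectors diagonal in the Fock basis are represented by the set S of Fock
  indices they project onto (Pi_S = sum_{n in S} |n><n|).\<close>
definition Peven :: "nat set" where "Peven = {n. even n}"
definition Podd :: "nat set" where "Podd = {n. odd n}"

definition proj_expect :: "nat set \<Rightarrow> nat set \<Rightarrow> (nat \<times> nat \<Rightarrow> complex) \<Rightarrow> real" where
  "proj_expect SA SB psi = infsum (\<lambda>kj. (cmod (psi kj))\<^sup>2) (SA \<times> SB)"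

text \<open>P(a,b|x,y) for measurements MA, MB (outcome => projector) and state xi.\<close>
definition Prob :: "(nat \<Rightarrow> nat set) \<Rightarrow> (nat \<Rightarrow> nat set) \<Rightarrow> (nat \<Rightarrow> complex)
     \<Rightarrow> nat \<Rightarrow> nat \<Rightarrow> nat \<Rightarrow> nat \<Rightarrow> real" where
  "Prob MA MB l a b x y = proj_expect (MA a) (MB b) (beam_splitter (noon l x y))"

definition Jval :: "(nat \<Rightarrow> nat set) \<Rightarrow> (nat \<Rightarrow> nat set) \<Rightarrow> (nat \<Rightarrow> complex) \<Rightarrow> real" where
  "Jval MA MB l = (Prob MA MB l 0 0 0 0 + Prob MA MB l 0 0 1 1
                  + Prob MA MB l 1 1 0 1 + Prob MA MB l 1 1 1 0) / 4"

definition meas_parity :: "nat \<Rightarrow> nat set" where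
  "meas_parity a = (if a = 0 then Peven else Podd)"
definition meas_flipped :: "nat \<Rightarrow> nat set" where
  "meas_flipped a = (if a = 0 then Podd else Peven)"

definition coh :: "complex \<Rightarrow> nat \<Rightarrow> complex" where
  "coh \<alpha> n = complex_of_real (exp (- (cmod \<alpha>)\<^sup>2 / 2)) * \<alpha> ^ n / complex_of_real (sqrt (fact n))"

text \<open>Squeezed vacuum S(zeta)|0>, S(zeta) = exp[(zeta^* a^2 - zeta a^+2)/2], via its
  standard Fock expansion (zeta = r e^{i theta}):
  (cosh r)^{-1/2} sum_m (-e^{i theta} tanh r)^m sqrt((2m)!)/(2^m m!) |2m>.\<close>
definition sqvac :: "complex \<Rightarrow> nat \<Rightarrow> complex" where
  "sqvac \<zeta> n = (if even n then
      complex_of_real (1 / sqrt (cosh (cmod \<zeta>))) *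
      (- (\<zeta> / complex_of_real (cmod \<zeta>)) * complex_of_real (tanh (cmod \<zeta>))) ^ (n div 2) *
      complex_of_real (sqrt (fact n) / (2 ^ (n div 2) * fact (n div 2)))
    else 0)"

end

theory Submission
  imports Defs
begin

text \<open>The NOON state has all of its photons in one mode, so the beam splitter only needs
  its matrix elements from |s,0> and |0,s>.  These two paths reach |k,s-k> with the same
  binomial amplitude and relative phase (-1)^(x+y+(s-k)): they cancel unless the parity of
  mode B equals x + y, and then double.  If every Fock component of xi has the same parity,
  the total photon number s fixes the parity of mode A as well, and since the binomial
  weights C(s,k)/2^s of each parity class sum to 1/2 for s > 0, the doubled amplitude
  exhausts the norm: both parity outcomes are certain, namely a = b = x + y (mod 2).\<close>

lemma bs_amp_all_from_A:
  "bs_amp k j (k + j) 0 = sqrt (fact k * fact j / (fact (k + j) * 2 ^ (k + j))) * real (k + j choose k)"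
proof -
  have "(\<Sum>p\<le>k + j. \<Sum>q\<le>(0::nat). if p + q = k
           then real (k + j choose p) * real (0 choose q) * (-1) ^ (0 - q) else 0)
        = (\<Sum>p\<le>k + j. if p = k then real (k + j choose p) else 0)"
    by (simp only: atMost_0 sum.insert finite.emptyI empty_iff sum.empty) simp
  then show ?thesis
    unfolding bs_amp_def by (simp add: sum.delta)
qed

lemma bs_amp_all_from_B: "bs_amp k j 0 (k + j) = (-1) ^ j * bs_amp k j (k + j) 0"
proof -
  have "(\<Sum>p\<le>(0::nat). \<Sum>q\<le>k + j. if p + q = k
           then real (0 choose p) * real (k + j choose q) * (-1) ^ (k + j - q) else 0)
        = (\<Sum>q\<le>k + j. if q = k then real (k + j choose q) * (-1) ^ (k + j - q) else 0)"
    by (simp only: atMost_0 sum.insert finite.emptyI empty_iff sum.empty) simp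
  then show ?thesis
    unfolding bs_amp_all_from_A unfolding bs_amp_def by (simp add: sum.delta mult_ac)
qed

lemma bs_amp_all_from_A_sq: "(bs_amp k j (k + j) 0)\<^sup>2 = real (k + j choose k) / 2 ^ (k + j)"
proof -
  have binom: "real (k + j choose k) = fact (k + j) / (fact k * fact j)"
    using binomial_fact[of k "k + j", where 'a = real] by simp
  show ?thesis
    unfolding bs_amp_all_from_A power_mult_distrib binom
    by (simp add: power2_eq_square field_simps)
qed

lemma beam_splitter_noon:
  "beam_splitter (noon l x y) (k, j) =
     complex_of_real (bs_amp k j (k + j) 0 / sqrt (noon_norm l x y)) * l (k + j)
       * ((-1) ^ x + (-1) ^ y * (-1) ^ j)"
proof -
  define s where "s = k + j"
  define c where "c = complex_of_real (1 / sqrt (noon_norm l x y))"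
  have noon_split: "noon l x y (m, s - m) = c * (-1) ^ x * (if m = s then l m else 0)
      + c * (-1) ^ y * (if m = 0 then l s else 0)" if "m \<le> s" for m
    using that unfolding noon_def c_def by (auto simp: algebra_simps)
  have "beam_splitter (noon l x y) (k, j) =
      (\<Sum>m\<le>s. complex_of_real (bs_amp k j m (s - m)) * noon l x y (m, s - m))"
    unfolding beam_splitter_def s_def by simp
  also have "\<dots> = (\<Sum>m\<le>s. if m = s then complex_of_real (bs_amp k j m (s - m)) * c * (-1) ^ x * l m else 0)
      + (\<Sum>m\<le>s. if m = 0 then complex_of_real (bs_amp k j m (s - m)) * c * (-1) ^ y * l s else 0)"
    by (subst sum.distrib[symmetric], rule sum.cong) (auto simp: noon_split algebra_simps)
  also have "\<dots> = complex_of_real (bs_amp k j s 0) * c * (-1) ^ x * l s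
      + complex_of_real (bs_amp k j 0 s) * c * (-1) ^ y * l s"
    by (simp add: sum.delta)
  finally show ?thesis
    unfolding s_def bs_amp_all_from_B c_def by (simp add: algebra_simps add_divide_distrib)
qed

lemma norm_beam_splitter_noon_sq:
  assumes "noon_norm l x y \<ge> 0"
  shows "(cmod (beam_splitter (noon l x y) (k, j)))\<^sup>2 =
     (cmod (l (k + j)))\<^sup>2 * (if even (x + y + j) then 4 * real (k + j choose k) / 2 ^ (k + j) else 0)
       / noon_norm l x y"
proof -
  have interference: "(cmod ((-1) ^ x + (-1) ^ y * (-1) ^ j :: complex))\<^sup>2 = (if even (x + y + j) then 4 else 0)"
    by (cases "even x"; cases "even y"; cases "even j") (auto simp: minus_one_power_iff)
  have "(cmod (beam_splitter (noon l x y) (k, j)))\<^sup>2 =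
      (bs_amp k j (k + j) 0 / sqrt (noon_norm l x y))\<^sup>2 * (cmod (l (k + j)))\<^sup>2
        * (cmod ((-1) ^ x + (-1) ^ y * (-1) ^ j :: complex))\<^sup>2"
    unfolding beam_splitter_noon by (simp only: norm_mult power_mult_distrib norm_of_real power2_abs)
  then show ?thesis
    using assms unfolding interference by (simp add: power_divide bs_amp_all_from_A_sq)
qed

lemma nonneg_has_sum_antidiagonals:
  fixes g :: "nat \<times> nat \<Rightarrow> real"
  assumes nonneg: "\<And>kj. g kj \<ge> 0"
    and diagonals: "((\<lambda>s. \<Sum>k\<le>s. g (k, s - k)) has_sum V) UNIV"
  shows "(g has_sum V) UNIV"
proof -
  define f where "f = (\<lambda>(s, k). g (k, s - k))"
  have bij: "bij_betw (\<lambda>(s, k). (k, s - k)) (SIGMA s:UNIV. {..s::nat}) UNIV"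
  proof (rule bij_betw_imageI)
    show "inj_on (\<lambda>(s, k). (k, s - k)) (SIGMA s:UNIV. {..s::nat})"
      by (auto simp: inj_on_def)
    show "(\<lambda>(s, k). (k, s - k)) ` (SIGMA s:UNIV. {..s::nat}) = UNIV"
      by (auto simp: image_iff) (metis add_diff_cancel_left' le_add1)
  qed
  have inner: "((\<lambda>k. f (s, k)) has_sum (\<Sum>k\<le>s. g (k, s - k))) {..s}" for s
    unfolding f_def by simp
  have "f summable_on (SIGMA s:UNIV. {..s})"
    by (rule summable_on_SigmaI[OF inner])
       (use diagonals has_sum_imp_summable nonneg in \<open>auto simp: f_def\<close>)
  then have "(f has_sum V) (SIGMA s:UNIV. {..s})"
    by (rule has_sum_SigmaI[OF inner diagonals])
  then show ?thesis
    using has_sum_reindex_bij_betw[OF bij] by (simp add: f_def case_prod_unfold) blast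
qed

text \<open>The factor 4 is |(-1)^x + (-1)^(y+j)|^2 for constructive interference, and
  C(s,k)/2^s is the probability that the beam splitter sends k of s photons to mode A.\<close>

definition coincidence_weight :: "nat set \<Rightarrow> nat set \<Rightarrow> nat \<Rightarrow> nat \<Rightarrow> nat \<Rightarrow> real" where
  "coincidence_weight SA SB x y s =
     (\<Sum>k\<le>s. if k \<in> SA \<and> s - k \<in> SB \<and> even (x + y + (s - k))
              then 4 * real (s choose k) / 2 ^ s else 0)"

lemma proj_expect_beam_splitter_noon:
  assumes N: "noon_norm l x y > 0"
    and weighted: "((\<lambda>s. (cmod (l s))\<^sup>2 * coincidence_weight SA SB x y s) has_sum V) UNIV"
  shows "proj_expect SA SB (beam_splitter (noon l x y)) = V / noon_norm l x y"
proof -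
  define w where "w = (\<lambda>kj. (cmod (beam_splitter (noon l x y) kj))\<^sup>2)"
  define g where "g = (\<lambda>kj. if kj \<in> SA \<times> SB then w kj else 0)"
  have "(\<Sum>k\<le>s. g (k, s - k)) = (cmod (l s))\<^sup>2 * coincidence_weight SA SB x y s / noon_norm l x y" for s
    unfolding g_def w_def coincidence_weight_def sum_distrib_left sum_divide_distrib
    using N by (intro sum.cong) (auto simp: norm_beam_splitter_noon_sq)
  then have "((\<lambda>s. \<Sum>k\<le>s. g (k, s - k)) has_sum V / noon_norm l x y) UNIV"
    using has_sum_divide_const[OF weighted] by simp
  then have "(g has_sum V / noon_norm l x y) UNIV"
    by (rule nonneg_has_sum_antidiagonals[rotated]) (simp add: g_def w_def)
  then have "(w has_sum V / noon_norm l x y) (SA \<times> SB)"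
    using has_sum_cong_neutral[of "SA \<times> SB" UNIV w g] by (simp add: g_def)
  then show ?thesis
    unfolding proj_expect_def w_def by (rule infsumI)
qed

lemma noon_norm_pos: "cmod (l 0) < 1 \<Longrightarrow> noon_norm l x y > 0"
  unfolding noon_norm_def
  by (cases "even (x + y)") (auto simp: abs_square_less_1 intro: add_pos_nonneg)

lemma proj_expect_beam_splitter_noon_eq_1:
  assumes norm: "normalized l" and l0: "cmod (l 0) < 1"
    and weight: "\<And>s. l s \<noteq> 0 \<Longrightarrow>
       coincidence_weight SA SB x y s = (if s = 0 then 2 + 2 * (-1) ^ (x + y) else 2)"
  shows "proj_expect SA SB (beam_splitter (noon l x y)) = 1"
proof -
  let ?c = "2 * (-1) ^ (x + y) * (cmod (l 0))\<^sup>2 :: real"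
  have total: "((\<lambda>s. 2 * (cmod (l s))\<^sup>2) has_sum 2) UNIV"
    using has_sum_cmult_right[OF norm[unfolded normalized_def], of 2] by simp
  have vacuum: "((\<lambda>s. if s = 0 then ?c else 0) has_sum ?c) (UNIV :: nat set)"
    using has_sum_cong_neutral[of UNIV "{0::nat}" "\<lambda>s. if s = 0 then ?c else 0" _ ?c]
      has_sum_finite[of "{0::nat}" "\<lambda>s. if s = 0 then ?c else 0"] by simp
  have "(cmod (l s))\<^sup>2 * coincidence_weight SA SB x y s
      = 2 * (cmod (l s))\<^sup>2 + (if s = 0 then ?c else 0)" for s
    by (cases "l s = 0") (auto simp: weight algebra_simps)
  then have "((\<lambda>s. (cmod (l s))\<^sup>2 * coincidence_weight SA SB x y s) has_sum 2 + ?c) UNIV"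
    using has_sum_add[OF total vacuum] by simp
  also have "2 + ?c = noon_norm l x y"
    unfolding noon_norm_def by (simp add: algebra_simps)
  finally show ?thesis
    using proj_expect_beam_splitter_noon noon_norm_pos[of l x y, OF l0] by simp
qed

lemma coincidence_weight_eq_2:
  assumes "s > 0"
    and "\<And>k. k \<le> s \<Longrightarrow> (k \<in> SA \<and> s - k \<in> SB \<and> even (x + y + (s - k))) \<longleftrightarrow> even k = b"
  shows "coincidence_weight SA SB x y s = 2"
proof -
  have "coincidence_weight SA SB x y s = (\<Sum>k\<le>s. if even k = b then 4 * real (s choose k) / 2 ^ s else 0)"
    unfolding coincidence_weight_def by (intro sum.cong refl if_cong assms(2)) auto
  also have "\<dots> = (2 / 2 ^ s) * (2 * (\<Sum>k\<le>s. if even k = b then real (s choose k) else 0))"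
    unfolding sum_distrib_left by (rule sum.cong) auto
  also have "\<dots> = 2"
    using choose_even_sum[OF \<open>s > 0\<close>, where 'a = real] choose_odd_sum[OF \<open>s > 0\<close>, where 'a = real]
    by (cases b) simp_all
  finally show ?thesis .
qed

lemma proj_expect_parity_support:
  assumes norm: "normalized l" and l0: "cmod (l 0) < 1"
    and support: "\<And>n. l n \<noteq> 0 \<Longrightarrow> even n = e"
  shows "proj_expect {k. even (x + y + k) = e} {j. even (x + y + j)} (beam_splitter (noon l x y)) = 1"
proof (rule proj_expect_beam_splitter_noon_eq_1[OF norm l0])
  fix s assume "l s \<noteq> 0"
  then have s: "even s = e" by (rule support)
  show "coincidence_weight {k. even (x + y + k) = e} {j. even (x + y + j)} x y s =
      (if s = 0 then 2 + 2 * (-1) ^ (x + y) else 2)"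
  proof (cases "s = 0")
    case True
    then show ?thesis
      using s by (simp add: coincidence_weight_def minus_one_power_iff)
  next
    case False
    then show ?thesis
      using s by (auto intro!: coincidence_weight_eq_2[where b = "even (x + y) = e"])
  qed
qed

lemma Prob_parity_xor:
  assumes "normalized l" "cmod (l 0) < 1" "\<And>n. odd n \<Longrightarrow> l n = 0"
  shows "Prob meas_parity meas_parity l ((x + y) mod 2) ((x + y) mod 2) x y = 1"
proof -
  have "meas_parity ((x + y) mod 2) = {k. even (x + y + k)}"
    by (auto simp: meas_parity_def Peven_def Podd_def)
  then show ?thesis
    using proj_expect_parity_support[OF assms(1,2), of True x y] assms(3)
    unfolding Prob_def by auto
qed

lemma Prob_flipped_xor:
  assumes "normalized l" "\<And>n. even n \<Longrightarrow> l n = 0"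
  shows "Prob meas_flipped meas_parity l ((x + y) mod 2) ((x + y) mod 2) x y = 1"
proof -
  have "meas_flipped ((x + y) mod 2) = {k. even (x + y + k) = False}"
    by (auto simp: meas_flipped_def Peven_def Podd_def)
  moreover have "meas_parity ((x + y) mod 2) = {k. even (x + y + k)}"
    by (auto simp: meas_parity_def Peven_def Podd_def)
  ultimately show ?thesis
    using proj_expect_parity_support[OF assms(1), of False x y] assms(2)
    unfolding Prob_def by auto
qed

lemma Jval_eq_1_if_xor:
  assumes "\<And>x y. Prob MA MB l ((x + y) mod 2) ((x + y) mod 2) x y = 1"
  shows "Jval MA MB l = 1"
  using assms[of 0 0] assms[of 1 1] assms[of 0 1] assms[of 1 0] by (simp add: Jval_def)

lemma normalized_cmod_0_lt_1:
  assumes norm: "normalized l" and "m \<noteq> 0" "l m \<noteq> 0"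
  shows "cmod (l 0) < 1"
proof -
  have "((\<lambda>n. (cmod (l n))\<^sup>2) has_sum (\<Sum>n\<in>{0, m}. (cmod (l n))\<^sup>2)) {0, m}"
    by (rule has_sum_finite) simp
  from has_sum_mono_neutral[OF this norm[unfolded normalized_def]]
  have "(cmod (l 0))\<^sup>2 + (cmod (l m))\<^sup>2 \<le> 1"
    using assms by simp
  moreover have "(cmod (l m))\<^sup>2 > 0"
    using assms by simp
  ultimately have "(cmod (l 0))\<^sup>2 < 1"
    by linarith
  then show ?thesis
    by (simp add: abs_square_less_1)
qed

lemma normalized_nonzero:
  assumes "normalized l"
  shows "\<exists>n. l n \<noteq> 0"
proof (rule ccontr)
  assume "\<nexists>n. l n \<noteq> 0"
  then have "((\<lambda>n. (cmod (l n))\<^sup>2) has_sum 0) UNIV"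
    by simp
  with assms show False
    unfolding normalized_def using has_sum_unique by fastforce
qed

lemma coh_uminus: "coh (- \<alpha>) n = (-1) ^ n * coh \<alpha> n"
  unfolding coh_def by (simp add: power_minus[of \<alpha>])

lemma Jval_even_coherent:
  assumes "\<alpha> \<noteq> 0" and norm: "normalized (\<lambda>n. c * (coh \<alpha> n + coh (- \<alpha>) n))"
  shows "Jval meas_parity meas_parity (\<lambda>n. c * (coh \<alpha> n + coh (- \<alpha>) n)) = 1"
proof -
  let ?l = "\<lambda>n. c * (coh \<alpha> n + coh (- \<alpha>) n)"
  have l: "?l n = c * (1 + (-1) ^ n) * coh \<alpha> n" for n
    unfolding coh_uminus by (simp add: algebra_simps)
  have "c \<noteq> 0"
    using normalized_nonzero[OF norm] by auto
  moreover have "coh \<alpha> 2 \<noteq> 0"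
    using assms(1) unfolding coh_def by (simp add: fact_numeral)
  ultimately have l0: "cmod (?l 0) < 1"
    using normalized_cmod_0_lt_1[OF norm, of 2] l[of 2] by simp
  show ?thesis
    by (rule Jval_eq_1_if_xor, rule Prob_parity_xor[OF norm l0]) (simp add: l)
qed

lemma Jval_odd_coherent:
  assumes norm: "normalized (\<lambda>n. c * (coh \<alpha> n - coh (- \<alpha>) n))"
  shows "Jval meas_flipped meas_parity (\<lambda>n. c * (coh \<alpha> n - coh (- \<alpha>) n)) = 1"
  by (rule Jval_eq_1_if_xor, rule Prob_flipped_xor[OF norm]) (simp add: coh_uminus)

lemma gbinomial_minus_half:
  "(-(1/2) gchoose m :: real) = (-1) ^ m * fact (2 * m) / (4 ^ m * (fact m)\<^sup>2)"
proof -
  have "fact (2 * m) = (4 ^ m * pochhammer (1/2) m * fact m :: real)"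
    using fact_double[of m, where 'a = real] by (simp add: power_mult)
  then show ?thesis
    unfolding gbinomial_pochhammer by (simp add: power2_eq_square)
qed

lemma one_minus_tanh_squared: "1 - (tanh r)\<^sup>2 = 1 / (cosh r)\<^sup>2" for r :: real
proof -
  have "cosh r \<noteq> 0"
    using cosh_real_pos[of r] by linarith
  then have "1 - (tanh r)\<^sup>2 = ((cosh r)\<^sup>2 - (sinh r)\<^sup>2) / (cosh r)\<^sup>2"
    unfolding tanh_def by (simp add: field_simps power_divide)
  then show ?thesis
    using hyperbolic_pythagoras[of r] by simp
qed

lemma squeezed_vacuum_weights_sums:
  "(\<lambda>m. (tanh r) ^ (2 * m) * fact (2 * m) / (4 ^ m * (fact m)\<^sup>2 * cosh r)) sums 1"
  for r :: real
proof -
  have "\<bar>- (tanh r)\<^sup>2\<bar> < 1"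
    using tanh_real_lt_1[of r] tanh_real_gt_neg1[of r] by (simp add: abs_square_less_1)
  from gen_binomial_real[OF this, of "-(1/2)"]
  have "(\<lambda>m. (tanh r) ^ (2 * m) * fact (2 * m) / (4 ^ m * (fact m)\<^sup>2))
      sums (1 - (tanh r)\<^sup>2) powr (-(1/2))"
    unfolding gbinomial_minus_half power_minus[of "(tanh r)\<^sup>2"] power_mult
    by (simp add: field_simps)
  also have "(1 - (tanh r)\<^sup>2) powr (-(1/2)) = cosh r"
    using cosh_real_pos[of r]
    by (simp add: one_minus_tanh_squared powr_minus powr_half_sqrt real_sqrt_divide)
  finally have "(\<lambda>m. (tanh r) ^ (2 * m) * fact (2 * m) / (4 ^ m * (fact m)\<^sup>2)) sums cosh r" .
  from sums_divide[OF this, of "cosh r"] show ?thesis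
    using cosh_real_pos[of r] by (simp add: mult.commute)
qed

lemma norm_sqvac_even_sq:
  "(cmod (sqvac \<zeta> (2 * m)))\<^sup>2 =
     (tanh (cmod \<zeta>)) ^ (2 * m) * fact (2 * m) / (4 ^ m * (fact m)\<^sup>2 * cosh (cmod \<zeta>))"
proof -
  define r where "r = cmod \<zeta>"
  define w where "w = - (\<zeta> / complex_of_real r) * complex_of_real (tanh r)"
  have w: "cmod w = \<bar>tanh r\<bar>"
    by (cases "\<zeta> = 0") (simp_all add: w_def r_def norm_mult norm_divide)
  have sv: "sqvac \<zeta> (2 * m) = complex_of_real (1 / sqrt (cosh r)) * w ^ m *
      complex_of_real (sqrt (fact (2 * m)) / (2 ^ m * fact m))"
    unfolding sqvac_def w_def r_def by simp
  have "cmod (sqvac \<zeta> (2 * m)) =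
      \<bar>1 / sqrt (cosh r)\<bar> * \<bar>tanh r\<bar> ^ m * \<bar>sqrt (fact (2 * m)) / (2 ^ m * fact m)\<bar>"
    by (simp only: sv norm_mult norm_power norm_of_real w)
  also have "\<dots>\<^sup>2 = (tanh r) ^ (2 * m) * fact (2 * m) / (4 ^ m * (fact m)\<^sup>2 * cosh r)"
  proof -
    have "(\<bar>tanh r\<bar> ^ m)\<^sup>2 = (tanh r) ^ (2 * m)"
      by (simp add: power_even_abs mult.commute flip: power_mult)
    moreover have "((2::real) ^ m)\<^sup>2 = 4 ^ m"
      by (simp add: power2_eq_square flip: power_mult_distrib)
    ultimately show ?thesis
      using cosh_real_pos[of r] by (simp add: power_mult_distrib power_divide)
  qed
  finally show ?thesis
    unfolding r_def .
qed

lemma normalized_sqvac: "normalized (sqvac \<zeta>)"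
proof -
  define F where "F = (\<lambda>n. (cmod (sqvac \<zeta> n))\<^sup>2)"
  have "((\<lambda>m. F (2 * m)) has_sum 1) UNIV"
    unfolding F_def norm_sqvac_even_sq
    by (rule sums_nonneg_imp_has_sum[OF squeezed_vacuum_weights_sums])
       (use cosh_real_pos in \<open>simp add: zero_le_even_power\<close>)
  then have "(F has_sum 1) (range (\<lambda>m. 2 * m))"
    using has_sum_reindex[of "\<lambda>m::nat. 2 * m" UNIV F 1] by (simp add: inj_on_def o_def)
  then have "(F has_sum 1) UNIV"
    by (rule has_sum_cong_neutral[THEN iffD1, rotated -1]) (auto simp: F_def sqvac_def elim!: evenE)
  then show ?thesis
    unfolding normalized_def F_def .
qed

lemma Jval_sqvac:
  assumes "\<zeta> \<noteq> 0"
  shows "Jval meas_parity meas_parity (sqvac \<zeta>) = 1"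
proof -
  have "cosh (cmod \<zeta>) \<noteq> 1"
    using assms by simp
  then have "cosh (cmod \<zeta>) > 1"
    using cosh_real_ge_1[of "cmod \<zeta>"] by linarith
  then have l0: "cmod (sqvac \<zeta> 0) < 1"
    by (simp add: sqvac_def norm_divide)
  show ?thesis
    by (rule Jval_eq_1_if_xor, rule Prob_parity_xor[OF normalized_sqvac l0]) (simp add: sqvac_def)
qed

theorem mainTheorem3:
  shows
  "(\<forall>l. normalized l \<and> cmod (l 0) < 1 \<and> (\<forall>n. odd n \<longrightarrow> l n = 0) \<longrightarrow>
       Prob meas_parity meas_parity l 0 0 0 0 = 1 \<and>
       Prob meas_parity meas_parity l 0 0 1 1 = 1 \<and>
       Prob meas_parity meas_parity l 1 1 0 1 = 1 \<and>
       Prob meas_parity meas_parity l 1 1 1 0 = 1 \<and>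
       Jval meas_parity meas_parity l = 1 \<and>
       (\<forall>x\<in>{0,1}. \<forall>y\<in>{0,1}.
          Prob meas_parity meas_parity l ((x + y) mod 2) ((x + y) mod 2) x y = 1))
   \<and> (\<forall>l. normalized l \<and> cmod (l 0) < 1 \<and> (\<forall>n. even n \<longrightarrow> l n = 0) \<longrightarrow>
       Jval meas_flipped meas_parity l = 1)
   \<and> (\<forall>\<alpha> c. \<alpha> \<noteq> 0 \<and> normalized (\<lambda>n. c * (coh \<alpha> n + coh (- \<alpha>) n)) \<longrightarrow>
       Jval meas_parity meas_parity (\<lambda>n. c * (coh \<alpha> n + coh (- \<alpha>) n)) = 1)
   \<and> (\<forall>\<alpha> c. \<alpha> \<noteq> 0 \<and> normalized (\<lambda>n. c * (coh \<alpha> n - coh (- \<alpha>) n)) \<longrightarrow>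
       Jval meas_flipped meas_parity (\<lambda>n. c * (coh \<alpha> n - coh (- \<alpha>) n)) = 1)
   \<and> (\<forall>\<zeta>. \<zeta> \<noteq> 0 \<longrightarrow> Jval meas_parity meas_parity (sqvac \<zeta>) = 1)"
proof -
  have xor_even_support: "Prob meas_parity meas_parity l ((x + y) mod 2) ((x + y) mod 2) x y = 1"
    if "normalized l" "cmod (l 0) < 1" "\<forall>n. odd n \<longrightarrow> l n = 0" for l x y
    using Prob_parity_xor that by blast
  have xor_odd_support: "Prob meas_flipped meas_parity l ((x + y) mod 2) ((x + y) mod 2) x y = 1"
    if "normalized l" "\<forall>n. even n \<longrightarrow> l n = 0" for l x y
    using Prob_flipped_xor that by blast
  show ?thesis
    using xor_even_support[of _ 0 0] xor_even_support[of _ 1 1]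
      xor_even_support[of _ 0 1] xor_even_support[of _ 1 0]
      xor_even_support[THEN Jval_eq_1_if_xor] xor_odd_support[THEN Jval_eq_1_if_xor]
      Jval_even_coherent Jval_odd_coherent Jval_sqvac
    by auto
qed

end
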